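(* Let $\nu_1,\nu_2$ be probability measures on an interval $I\subseteq\mathbb{R}$ with densities $n_1,n_2$ strictly positive on $I$, with distribution functions $F_1,F_2$, and let $T=F_2^{-1}\circ F_1$ be the monotone transport map (so $T_\#\nu_1=\nu_2$). Let $\pi(dx,dy)=\nu_1(dx)\delta_{T(x)}(dy)$, let $\nu_-$ and $\nu_+$ be the pushforwards of $\pi$ under $(x,y)\mapsto\min(x,y)$ and $(x,y)\mapsto\max(x,y)$ respectively, and let $A=\{x\in I: x\le T(x)\}$. Then $T(A)=A$, $T(I\setminus A)=I\setminus A$, and $\nu_-,\nu_+$ have densities \[ n_-=n_1\mathbb{1}_A+n_2\mathbb{1}_{I\setminus A},\qquad n_+=n_1\mathbb{1}_{I\setminus A}+n_2\mathbb{1}_A . \] *)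

theory Defs
  imports "HOL-Probability.Probability"
begin

text \<open>Monotone transport map T = F2^{-1} o F1 on the interval I.  F2 restricted to I
  is strictly increasing, so F2^{-1} is its inverse on I.  Outside I (a nu1-null set)
  we use the convention T x = x.\<close>
definition monotone_transport ::
  "real set \<Rightarrow> (real \<Rightarrow> real) \<Rightarrow> (real \<Rightarrow> real) \<Rightarrow> real \<Rightarrow> real" where
  "monotone_transport I F1 F2 x =
     (if x \<in> I then (THE y. y \<in> I \<and> F2 y = F1 x) else x)"

end

theory Submission
  imports Defs
begin

text \<open>
  Since the densities are positive on the interval \<open>I\<close>, both distribution functions are
  continuous and strictly increasing on \<open>I\<close>, and they have the same image on \<open>I\<close>: the open
  unit interval together with \<open>0\<close> or \<open>1\<close> exactly when \<open>I\<close> has a least or greatest element.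
  Hence \<open>T\<close> is a strictly increasing bijection of \<open>I\<close> with \<open>T\<^sub>#\<nu>\<^sub>1 = \<nu>\<^sub>2\<close>, and for such a
  map \<open>x \<le> T x\<close> iff \<open>T x \<le> T (T x)\<close>, so \<open>A\<close> and \<open>I - A\<close> are \<open>T\<close>-invariant.
  The minimum of \<open>x\<close> and \<open>T x\<close> is \<open>x\<close> on \<open>A\<close> and \<open>T x\<close> on \<open>I - A\<close>, so its law is \<open>\<nu>\<^sub>1\<close>
  restricted to \<open>A\<close> plus the image of \<open>\<nu>\<^sub>1\<close> restricted to \<open>I - A = T\<^sup>-\<^sup>1(I - A)\<close>, which is
  \<open>\<nu>\<^sub>2\<close> restricted to \<open>I - A\<close>; symmetrically for the maximum.
\<close>

lemma is_interval_notin_cases: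
  fixes I :: "real set"
  assumes "is_interval I" "y \<notin> I"
  shows "(\<forall>z\<in>I. y < z) \<or> (\<forall>z\<in>I. z < y)"
  using assms mem_is_interval_1_I by (metis linorder_not_le)

locale interval_density =
  fixes I :: "real set" and n :: "real \<Rightarrow> real" and \<nu> :: "real measure"
  assumes interval: "is_interval I"
    and density_measurable [measurable]: "n \<in> borel_measurable borel"
    and density_pos: "\<And>x. x \<in> I \<Longrightarrow> n x > 0"
    and \<nu>_eq: "\<nu> = density lborel (\<lambda>x. ennreal (n x * indicator I x))"
    and prob: "prob_space \<nu>"
begin

lemma interval_borel [measurable]: "I \<in> sets borel"
  using interval real_interval_borel_measurable by blast

lemma sets_eq [simp, measurable_cong]: "sets \<nu> = sets borel"
  by (simp add: \<nu>_eq)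

lemma space_eq [simp]: "space \<nu> = UNIV"
  by (simp add: \<nu>_eq)

lemma real_distribution: "real_distribution \<nu>"
  using prob by (simp add: real_distribution_def real_distribution_axioms_def)

sublocale real_distribution \<nu>
  by (fact real_distribution)

lemma null_sets_iff:
  "S \<in> null_sets \<nu> \<longleftrightarrow> S \<in> sets borel \<and> (AE x in lborel. x \<in> S \<inter> I \<longrightarrow> n x \<le> 0)"
  by (auto simp: \<nu>_eq null_sets_density_iff indicator_def ennreal_eq_0_iff elim!: eventually_mono)

lemma measure_Int_interval: "S \<in> sets borel \<Longrightarrow> measure \<nu> (S \<inter> I) = measure \<nu> S"
  using measure_Diff_null_set[of S \<nu> "- I"] by (simp add: null_sets_iff Diff_eq)

lemma measure_interval: "measure \<nu> I = 1"
  using measure_Int_interval[of UNIV] prob_space by simp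

lemma measure_singleton: "measure \<nu> {x} = 0"
proof -
  have "AE y in lborel. y \<in> {x} \<inter> I \<longrightarrow> n y \<le> 0"
    using AE_lborel_singleton[of x] by eventually_elim auto
  then show ?thesis
    by (intro measure_eq_0_null_sets null_sets_iff[THEN iffD2]) simp
qed

lemma measure_Ioc_pos:
  assumes "a < b" "a \<in> I" "b \<in> I"
  shows "measure \<nu> {a<..b} > 0"
proof (rule ccontr)
  assume "\<not> ?thesis"
  then have "{a<..b} \<in> null_sets \<nu>"
    using measure_nonneg[of \<nu> "{a<..b}"] by (intro null_setsI) (auto simp: emeasure_eq_measure)
  then have "AE x in lborel. x \<in> {a<..b} \<inter> I \<longrightarrow> n x \<le> 0"
    using null_sets_iff by blast
  moreover have "x \<in> I" if "x \<in> {a<..b}" for x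
    using mem_is_interval_1_I[OF interval assms(2,3)] that by simp
  ultimately have "AE x in lborel. x \<notin> {a<..b}"
    by (elim eventually_mono) (meson IntI density_pos not_le)
  then have "{a<..b} \<in> null_sets lborel"
    by (subst AE_iff_null_sets) auto
  then show False
    using \<open>a < b\<close> by (auto simp: ennreal_eq_0_iff)
qed

lemma cdf_strict_mono_on: "strict_mono_on I (cdf \<nu>)"
  using cdf_diff_eq measure_Ioc_pos by (force intro!: strict_mono_onI)

lemma continuous_cdf: "isCont (cdf \<nu>) x"
  by (simp add: isCont_cdf measure_singleton)

lemma cdf_below_interval:
  assumes "\<And>z. z \<in> I \<Longrightarrow> y < z"
  shows "cdf \<nu> y = 0"
proof -
  have "{..y} \<inter> I = {}"
    using assms by force
  then show ?thesis
    using measure_Int_interval[of "{..y}"] by (simp add: cdf_def2)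
qed

lemma cdf_above_interval:
  assumes "\<And>z. z \<in> I \<Longrightarrow> z < y"
  shows "cdf \<nu> y = 1"
proof -
  have "{..y} \<inter> I = I"
    using assms by (force intro: less_imp_le)
  then show ?thesis
    using measure_Int_interval[of "{..y}"] by (simp add: cdf_def2 measure_interval)
qed

lemma cdf_eq_0_iff:
  assumes "x \<in> I"
  shows "cdf \<nu> x = 0 \<longleftrightarrow> (\<forall>z\<in>I. x \<le> z)"
proof
  assume "cdf \<nu> x = 0"
  then show "\<forall>z\<in>I. x \<le> z"
    using assms cdf_nonneg strict_mono_onD[OF cdf_strict_mono_on] by (metis not_le)
next
  assume "\<forall>z\<in>I. x \<le> z"
  then have "{..x} \<inter> I \<subseteq> {x}"
    by auto
  then have "measure \<nu> ({..x} \<inter> I) \<le> measure \<nu> {x}"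
    by (intro finite_measure_mono) auto
  then have "measure \<nu> ({..x} \<inter> I) = 0"
    using measure_singleton[of x] measure_nonneg[of \<nu> "{..x} \<inter> I"] by linarith
  then show "cdf \<nu> x = 0"
    by (simp add: cdf_def2 measure_Int_interval)
qed

lemma cdf_eq_1_iff:
  assumes "x \<in> I"
  shows "cdf \<nu> x = 1 \<longleftrightarrow> (\<forall>z\<in>I. z \<le> x)"
proof
  assume "cdf \<nu> x = 1"
  then show "\<forall>z\<in>I. z \<le> x"
    using assms cdf_bounded_prob strict_mono_onD[OF cdf_strict_mono_on] by (metis not_le)
next
  assume "\<forall>z\<in>I. z \<le> x"
  then have "{..x} \<inter> I = I"
    by auto
  then show "cdf \<nu> x = 1"
    using measure_Int_interval[of "{..x}"] by (simp add: cdf_def2 measure_interval)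
qed

lemma cdf_attains:
  assumes "0 < t" "t < 1"
  shows "\<exists>y\<in>I. cdf \<nu> y = t"
proof -
  obtain p where p: "cdf \<nu> p < t"
    using order_tendstoD(2)[OF cdf_lim_at_bot \<open>0 < t\<close>] by (auto simp: eventually_at_bot_linorder)
  obtain q where q: "cdf \<nu> q > t"
    using order_tendstoD(1)[OF cdf_lim_at_top_prob \<open>t < 1\<close>] by (auto simp: eventually_at_top_linorder)
  have "p \<le> q"
    using p q cdf_nondecreasing[of q p] by linarith
  moreover have "continuous_on {p..q} (cdf \<nu>)"
    using continuous_cdf by (simp add: continuous_at_imp_continuous_on)
  ultimately obtain y where y: "cdf \<nu> y = t"
    using IVT'[of "cdf \<nu>" p t q] p q by (auto simp: less_imp_le)
  have "y \<in> I"
  proof (rule ccontr)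
    assume "y \<notin> I"
    then consider "\<forall>z\<in>I. y < z" | "\<forall>z\<in>I. z < y"
      using is_interval_notin_cases[OF interval] by blast
    then show False
      using cdf_below_interval[of y] cdf_above_interval[of y] y assms by cases auto
  qed
  with y show ?thesis
    by blast
qed

lemma cdf_image_interval:
  "cdf \<nu> ` I =
    {t \<in> {0..1}. (t = 0 \<longrightarrow> (\<exists>x\<in>I. \<forall>z\<in>I. x \<le> z)) \<and> (t = 1 \<longrightarrow> (\<exists>x\<in>I. \<forall>z\<in>I. z \<le> x))}"
  (is "_ = ?R")
proof (intro equalityI subsetI)
  fix t :: real assume "t \<in> cdf \<nu> ` I"
  then obtain x where x: "x \<in> I" "t = cdf \<nu> x"
    by blast
  then show "t \<in> ?R"
    using cdf_nonneg[of x] cdf_bounded_prob[of x] cdf_eq_0_iff[OF x(1)] cdf_eq_1_iff[OF x(1)] by auto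
next
  fix t :: real
  assume t: "t \<in> ?R"
  consider "t = 0" | "t = 1" | "0 < t" "t < 1"
    using t by fastforce
  then show "t \<in> cdf \<nu> ` I"
  proof cases
    case 1
    with t obtain x where "x \<in> I" "\<forall>z\<in>I. x \<le> z"
      by auto
    with 1 show ?thesis
      using cdf_eq_0_iff[of x] by (intro image_eqI[of t _ x]) simp_all
  next
    case 2
    with t obtain x where "x \<in> I" "\<forall>z\<in>I. z \<le> x"
      by auto
    with 2 show ?thesis
      using cdf_eq_1_iff[of x] by (intro image_eqI[of t _ x]) simp_all
  next
    case 3
    then show ?thesis
      using cdf_attains by (metis image_eqI)
  qed
qed

end

lemma image_eq_of_invariant:
  assumes "T ` I = I" "B \<subseteq> I" "\<And>x. x \<in> I \<Longrightarrow> T x \<in> B \<longleftrightarrow> x \<in> B"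
  shows "T ` B = B"
proof
  show "T ` B \<subseteq> B"
    using assms(2,3) by auto
  show "B \<subseteq> T ` B"
  proof
    fix y assume "y \<in> B"
    then obtain x where "x \<in> I" "y = T x"
      using assms(1,2) by blast
    then show "y \<in> T ` B"
      using assms(3) \<open>y \<in> B\<close> by blast
  qed
qed

lemma distr_piecewise_density:
  fixes f g :: "real \<Rightarrow> ennreal" and T :: "real \<Rightarrow> real"
  assumes [measurable]: "f \<in> borel_measurable borel" "g \<in> borel_measurable borel"
    "T \<in> borel_measurable borel" "C \<in> sets borel"
    and M: "M = density lborel f"
    and push: "distr M borel T = density lborel g"
    and invariant: "\<And>x. T x \<in> C \<longleftrightarrow> x \<in> C"
  shows "distr M lborel (\<lambda>x. if x \<in> C then x else T x) =
    density lborel (\<lambda>x. f x * indicator C x + g x * indicator (- C) x)"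
proof (rule measure_eqI)
  have [measurable_cong]: "sets M = sets borel" and [simp]: "space M = UNIV"
    using M by simp_all
  fix S assume "S \<in> sets (distr M lborel (\<lambda>x. if x \<in> C then x else T x))"
  then have [measurable]: "S \<in> sets borel"
    by simp
  have preimage: "(\<lambda>x. if x \<in> C then x else T x) -` S = (S \<inter> C) \<union> T -` (S - C)"
    using invariant by (auto split: if_split_asm)
  have "(\<lambda>x. if x \<in> C then x else T x) \<in> measurable M lborel"
    by measurable
  then have "emeasure (distr M lborel (\<lambda>x. if x \<in> C then x else T x)) S =
      emeasure M ((S \<inter> C) \<union> T -` (S - C))"
    by (simp add: emeasure_distr preimage)
  also have "\<dots> = emeasure M (S \<inter> C) + emeasure M (T -` (S - C))"
    using invariant measurable_sets_borel[of T borel "S - C"] by (intro plus_emeasure[symmetric]) auto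
  also have "emeasure M (T -` (S - C)) = emeasure (density lborel g) (S - C)"
    by (simp flip: push add: emeasure_distr)
  also have "emeasure M (S \<inter> C) + emeasure (density lborel g) (S - C) =
      (\<integral>\<^sup>+x. f x * indicator (S \<inter> C) x + g x * indicator (S - C) x \<partial>lborel)"
    by (simp add: M emeasure_density nn_integral_add)
  also have "\<dots> = emeasure (density lborel (\<lambda>x. f x * indicator C x + g x * indicator (- C) x)) S"
    by (auto simp: emeasure_density indicator_def intro!: nn_integral_cong)
  finally show "emeasure (distr M lborel (\<lambda>x. if x \<in> C then x else T x)) S =
      emeasure (density lborel (\<lambda>x. f x * indicator C x + g x * indicator (- C) x)) S" .
qed simp

lemma distr_distr_graph:
  fixes T :: "real \<Rightarrow> real" and h :: "real \<times> real \<Rightarrow> real"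
  assumes "sets M = sets borel" "T \<in> borel_measurable borel" "h \<in> lborel \<Otimes>\<^sub>M lborel \<rightarrow>\<^sub>M lborel"
  shows "distr (distr M (lborel \<Otimes>\<^sub>M lborel) (\<lambda>x. (x, T x))) lborel h = distr M lborel (\<lambda>x. h (x, T x))"
proof -
  have "(\<lambda>x. (x, T x)) \<in> M \<rightarrow>\<^sub>M lborel \<Otimes>\<^sub>M lborel"
    using assms(1,2) by measurable
  with assms(3) show ?thesis
    by (simp add: distr_distr comp_def)
qed

locale interval_density_pair =
  \<nu>1: interval_density I n1 \<nu>1 + \<nu>2: interval_density I n2 \<nu>2 for I n1 \<nu>1 n2 \<nu>2
begin

lemma cdf_image_eq: "cdf \<nu>1 ` I = cdf \<nu>2 ` I"
  by (simp add: \<nu>1.cdf_image_interval \<nu>2.cdf_image_interval)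

abbreviation transport :: "real \<Rightarrow> real" where
  "transport \<equiv> monotone_transport I (cdf \<nu>1) (cdf \<nu>2)"

lemma transport_outside [simp]: "x \<notin> I \<Longrightarrow> transport x = x"
  by (simp add: monotone_transport_def)

lemma
  assumes "x \<in> I"
  shows transport_mem_interval: "transport x \<in> I"
    and cdf_transport: "cdf \<nu>2 (transport x) = cdf \<nu>1 x"
proof -
  have "cdf \<nu>1 x \<in> cdf \<nu>2 ` I"
    using assms cdf_image_eq by blast
  then obtain y where y: "y \<in> I" "cdf \<nu>2 y = cdf \<nu>1 x"
    by (metis imageE)
  have "\<exists>!y. y \<in> I \<and> cdf \<nu>2 y = cdf \<nu>1 x"
  proof (rule ex1I[of _ y])
    fix y' assume "y' \<in> I \<and> cdf \<nu>2 y' = cdf \<nu>1 x"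
    then show "y' = y"
      using strict_mono_on_eqD[OF \<nu>2.cdf_strict_mono_on, of y y'] y by simp
  qed (use y in simp)
  from theI'[OF this] assms show "transport x \<in> I" "cdf \<nu>2 (transport x) = cdf \<nu>1 x"
    by (simp_all add: monotone_transport_def)
qed

lemma transport_eqI:
  assumes "x \<in> I" "y \<in> I" "cdf \<nu>2 y = cdf \<nu>1 x"
  shows "transport x = y"
  using strict_mono_on_eqD[OF \<nu>2.cdf_strict_mono_on, of y "transport x"]
    transport_mem_interval[OF assms(1)] cdf_transport[OF assms(1)] assms
  by simp

lemma strict_mono_on_transport: "strict_mono_on I transport"
proof (rule strict_mono_onI)
  fix a b assume "a \<in> I" "b \<in> I" "a < b"
  then have "cdf \<nu>2 (transport a) < cdf \<nu>2 (transport b)"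
    using cdf_transport strict_mono_onD[OF \<nu>1.cdf_strict_mono_on] by simp
  then show "transport a < transport b"
    using \<nu>2.cdf_nondecreasing by (meson not_less)
qed

lemma transport_image: "transport ` I = I"
proof (intro equalityI subsetI)
  fix y assume "y \<in> I"
  then obtain x where "x \<in> I" "cdf \<nu>1 x = cdf \<nu>2 y"
    using cdf_image_eq by (metis imageE imageI)
  with \<open>y \<in> I\<close> show "y \<in> transport ` I"
    using transport_eqI by (metis imageI)
qed (use transport_mem_interval in blast)

lemma transport_measurable [measurable]: "transport \<in> borel_measurable borel"
proof -
  have "(\<lambda>x. if x \<in> I then transport x else x) \<in> borel_measurable borel"
    using strict_mono_on_imp_mono_on[OF strict_mono_on_transport]
    by (subst measurable_If_restrict_space_iff)
       (auto intro: borel_measurable_mono_on_fnc measurable_restrict_space1)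
  moreover have "(\<lambda>x. if x \<in> I then transport x else x) = transport"
    by auto
  ultimately show ?thesis
    by simp
qed

lemma measure_transport_le: "measure \<nu>1 {x \<in> I. transport x \<le> c} = cdf \<nu>2 c"
proof (cases "c \<in> I")
  case True
  then obtain x0 where x0: "x0 \<in> I" "transport x0 = c"
    by (metis imageE transport_image)
  then have "{x \<in> I. transport x \<le> c} = {..x0} \<inter> I"
    using strict_mono_on_less_eq[OF strict_mono_on_transport _ \<open>x0 \<in> I\<close>] by auto
  then show ?thesis
    using \<nu>1.measure_Int_interval[of "{..x0}"] cdf_transport[OF \<open>x0 \<in> I\<close>] x0
    by (simp add: cdf_def2)
next
  case False
  then consider "\<forall>z\<in>I. c < z" | "\<forall>z\<in>I. z < c"
    using is_interval_notin_cases[OF \<nu>1.interval] by blast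
  then show ?thesis
  proof cases
    case 1
    then have "c < transport x" if "x \<in> I" for x
      using transport_mem_interval[OF that] by blast
    then have preimage: "{x \<in> I. transport x \<le> c} = {}"
      by (auto simp: not_le[symmetric])
    show ?thesis
      unfolding preimage using 1 by (simp add: \<nu>2.cdf_below_interval)
  next
    case 2
    then have "transport x < c" if "x \<in> I" for x
      using transport_mem_interval[OF that] by blast
    then have preimage: "{x \<in> I. transport x \<le> c} = I"
      by (auto intro: less_imp_le)
    show ?thesis
      unfolding preimage using 2 by (simp add: \<nu>2.cdf_above_interval \<nu>1.measure_interval)
  qed
qed

lemma distr_transport: "distr \<nu>1 borel transport = \<nu>2"
proof (rule cdf_unique)
  show "real_distribution (distr \<nu>1 borel transport)"
    by simp
  show "real_distribution \<nu>2"
    by (fact \<nu>2.real_distribution)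
  show "cdf (distr \<nu>1 borel transport) = cdf \<nu>2"
  proof
    fix c
    have "cdf (distr \<nu>1 borel transport) c = measure \<nu>1 (transport -` {..c})"
      by (simp add: cdf_def2 measure_distr)
    also have "\<dots> = measure \<nu>1 {x \<in> I. transport x \<le> c}"
      using \<nu>1.measure_Int_interval[of "transport -` {..c}"]
      by (simp add: Collect_conj_eq Int_commute vimage_def)
    finally show "cdf (distr \<nu>1 borel transport) c = cdf \<nu>2 c"
      by (simp add: measure_transport_le)
  qed
qed

abbreviation advancing :: "real set" where
  "advancing \<equiv> {x \<in> I. x \<le> transport x}"

lemma advancing_borel [measurable]: "advancing \<in> sets borel"
  by measurable

lemma transport_mem_advancing_iff:
  assumes "x \<in> I"
  shows "transport x \<in> advancing \<longleftrightarrow> x \<in> advancing"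
proof -
  have "transport x \<in> I"
    by (fact transport_mem_interval[OF assms])
  then show ?thesis
    using strict_mono_on_less_eq[OF strict_mono_on_transport assms \<open>transport x \<in> I\<close>] assms by simp
qed

lemma transport_image_advancing: "transport ` advancing = advancing"
  by (rule image_eq_of_invariant[OF transport_image _ transport_mem_advancing_iff]) auto

lemma transport_image_retreating: "transport ` (I - advancing) = I - advancing"
proof (rule image_eq_of_invariant[OF transport_image])
  fix x assume "x \<in> I"
  then show "transport x \<in> I - advancing \<longleftrightarrow> x \<in> I - advancing"
    using transport_mem_advancing_iff transport_mem_interval by simp
qed auto

lemma distr_piecewise_transport:
  assumes [measurable]: "C \<in> sets borel" and "C \<subseteq> I"
    and invariant: "\<And>x. x \<in> I \<Longrightarrow> transport x \<in> C \<longleftrightarrow> x \<in> C"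
  shows "distr \<nu>1 lborel (\<lambda>x. if x \<in> C then x else transport x) =
    density lborel (\<lambda>x. ennreal (n1 x * indicator C x + n2 x * indicator (I - C) x))"
proof -
  \<comment> \<open>\<open>transport\<close> is the identity off \<open>I\<close>, so \<open>C \<union> - I\<close> is invariant on the whole line\<close>
  let ?C = "C \<union> - I"
  have "(\<lambda>x. if x \<in> C then x else transport x) = (\<lambda>x. if x \<in> ?C then x else transport x)"
    by auto
  moreover have "distr \<nu>1 lborel (\<lambda>x. if x \<in> ?C then x else transport x) =
      density lborel (\<lambda>x. ennreal (n1 x * indicator I x) * indicator ?C x +
        ennreal (n2 x * indicator I x) * indicator (- ?C) x)"
  proof (rule distr_piecewise_density[OF _ _ transport_measurable _ \<nu>1.\<nu>_eq])
    show "distr \<nu>1 borel transport = density lborel (\<lambda>x. ennreal (n2 x * indicator I x))"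
      using distr_transport \<nu>2.\<nu>_eq by simp
    show "transport x \<in> ?C \<longleftrightarrow> x \<in> ?C" for x
      using invariant transport_mem_interval by (cases "x \<in> I") auto
  qed simp_all
  moreover have "(\<lambda>x. ennreal (n1 x * indicator I x) * indicator ?C x +
        ennreal (n2 x * indicator I x) * indicator (- ?C) x) =
      (\<lambda>x. ennreal (n1 x * indicator C x + n2 x * indicator (I - C) x))"
    using \<open>C \<subseteq> I\<close> by (auto simp: indicator_def fun_eq_iff)
  ultimately show ?thesis
    by simp
qed

lemma distr_min_transport:
  "distr \<nu>1 lborel (\<lambda>x. min x (transport x)) =
    density lborel (\<lambda>x. ennreal (n1 x * indicator advancing x + n2 x * indicator (I - advancing) x))"
proof -
  have "(\<lambda>x. min x (transport x)) = (\<lambda>x. if x \<in> advancing then x else transport x)"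
    by (auto simp: fun_eq_iff min_def)
  then show ?thesis
    using distr_piecewise_transport[of advancing] transport_mem_advancing_iff by auto
qed

lemma distr_max_transport:
  "distr \<nu>1 lborel (\<lambda>x. max x (transport x)) =
    density lborel (\<lambda>x. ennreal (n1 x * indicator (I - advancing) x + n2 x * indicator advancing x))"
proof -
  have "(\<lambda>x. max x (transport x)) = (\<lambda>x. if x \<in> I - advancing then x else transport x)"
    by (auto simp: fun_eq_iff max_def)
  moreover have "I - (I - advancing) = advancing"
    by auto
  ultimately show ?thesis
    using distr_piecewise_transport[of "I - advancing"] transport_mem_advancing_iff transport_mem_interval
    by (auto simp: add.commute)
qed

end

theorem mainTheorem8:
  fixes I :: "real set" and n1 n2 F1 F2 T :: "real \<Rightarrow> real"
    and \<nu>1 \<nu>2 :: "real measure" and A :: "real set"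
  assumes I: "is_interval I"
    and n1_meas: "n1 \<in> borel_measurable borel" and n2_meas: "n2 \<in> borel_measurable borel"
    and n1_pos: "\<And>x. x \<in> I \<Longrightarrow> n1 x > 0" and n2_pos: "\<And>x. x \<in> I \<Longrightarrow> n2 x > 0"
    and \<nu>1_def: "\<nu>1 = density lborel (\<lambda>x. ennreal (n1 x * indicator I x))"
    and \<nu>2_def: "\<nu>2 = density lborel (\<lambda>x. ennreal (n2 x * indicator I x))"
    and prob1: "prob_space \<nu>1" and prob2: "prob_space \<nu>2"
    and F1_def: "\<And>x. F1 x = measure \<nu>1 {..x}"
    and F2_def: "\<And>x. F2 x = measure \<nu>2 {..x}"
    and T_def: "T = monotone_transport I F1 F2"
    and A_def: "A = {x \<in> I. x \<le> T x}"
  shows "T ` A = A \<and> T ` (I - A) = I - A \<and>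
    (let \<pi> = distr \<nu>1 (lborel \<Otimes>\<^sub>M lborel) (\<lambda>x. (x, T x)) in
       distr \<pi> lborel (\<lambda>(x, y). min x y) =
         density lborel (\<lambda>x. ennreal ((n1 x * indicator A x + n2 x * indicator (I - A) x)))
     \<and> distr \<pi> lborel (\<lambda>(x, y). max x y) =
         density lborel (\<lambda>x. ennreal ((n1 x * indicator (I - A) x + n2 x * indicator A x))))"
proof -
  interpret interval_density_pair I n1 \<nu>1 n2 \<nu>2
    using I n1_meas n1_pos \<nu>1_def prob1 n2_meas n2_pos \<nu>2_def prob2
    by (intro interval_density_pair.intro interval_density.intro) simp_all
  have "F1 = cdf \<nu>1" "F2 = cdf \<nu>2"
    by (simp_all add: fun_eq_iff F1_def F2_def cdf_def2)
  then have T: "T = transport" and A: "A = advancing"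
    by (simp_all add: T_def A_def)
  have graph: "distr (distr \<nu>1 (lborel \<Otimes>\<^sub>M lborel) (\<lambda>x. (x, transport x))) lborel h =
      distr \<nu>1 lborel (\<lambda>x. h (x, transport x))"
    if "h \<in> lborel \<Otimes>\<^sub>M lborel \<rightarrow>\<^sub>M lborel" for h :: "real \<times> real \<Rightarrow> real"
    using that by (intro distr_distr_graph) simp_all
  have "(\<lambda>(x, y). min x y :: real) \<in> lborel \<Otimes>\<^sub>M lborel \<rightarrow>\<^sub>M lborel"
    by measurable
  moreover have "(\<lambda>(x, y). max x y :: real) \<in> lborel \<Otimes>\<^sub>M lborel \<rightarrow>\<^sub>M lborel"
    by measurable
  ultimately show ?thesis
    unfolding Let_def
    by (simp add: graph T A transport_image_advancing transport_image_retreating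
        distr_min_transport distr_max_transport)
qed

end
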